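(* Assume the setting described in the context (in particular $f=\frac1n\sum_{i=1}^n f_i$ is convex and $L$-smooth with minimizer $\mathbf{x}^\star$, the stochastic gradients have variance at most $\sigma^2$, the gradient dissimilarity is at most $\zeta^2$, and the compressor $\mathcal{C}_R$ satisfies $\mathbb{E}\|\mathcal{C}_R(\mathbf{x})-\mathbf{x}\|^2\le (1-\delta)^R\|\mathbf{x}\|^2$). Let $(\mathbf{y}_t)$, $(\mathbf{g}^i_t)$, $(\hat{\mathbf{g}}^i_t)$ be generated by NEOLITHIC with positive step weights $(a_t)_{t\ge1}$, and for $t\ge 0$ let $$E_{t+1}:=\mathbb{E}\Big\|\sum_{j=0}^{t-1} a_{j+1}\Big(\mathbf{g}_j-\frac1n\sum_{i=1}^n\hat{\mathbf{g}}^i_j\Big)\Big\|^2,\qquad \mathbf{g}_j:=\frac1n\sum_{i=1}^n \mathbf{g}^i_j .$$ Then for every $T\ge1$ and every choice of nonnegative weights $w_1,\dots,w_T$, $$\sum_{t=0}^{T-1} w_{t+1}E_{t+1}\le (1-\delta)^R\zeta^2\sum_{t=0}^{T-1}w_{t+1}\,t\sum_{j=0}^{t-1}a_{j+1}^2+2L(1-\delta)^R\sum_{t=0}^{T-1}w_{t+1}\,t\sum_{j=0}^{t-1}a_{j+1}^2\,\mathbb{E}\big[\beta_f(\mathbf{y}_j,\mathbf{x}^\star)\big]+(1-\delta)^R\sigma^2\sum_{t=0}^{T-1}w_{t+1}\,t\sum_{j=0}^{t-1}a_{j+1}^2 .$$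
   Context: Setting: $f(\mathbf{x})=\frac1n\sum_{i=1}^n f_i(\mathbf{x})$ on $\mathbb{R}^d$, $f$ convex and $L$-smooth (gradient $L$-Lipschitz), with a minimizer $\mathbf{x}^\star$. Bregman divergence: $\beta_f(\mathbf{x},\mathbf{y}):=f(\mathbf{x})-f(\mathbf{y})-\langle\nabla f(\mathbf{y}),\mathbf{x}-\mathbf{y}\rangle$. Each client $i$ has a stochastic gradient oracle $\mathbf{g}_i(\mathbf{x},\xi)$ with $\mathbb{E}_\xi[\mathbf{g}_i(\mathbf{x},\xi)]=\nabla f_i(\mathbf{x})$ and $\mathbb{E}_\xi\|\mathbf{g}_i(\mathbf{x},\xi)-\nabla f_i(\mathbf{x})\|^2\le\sigma^2$ for all $\mathbf{x}$, with fresh independent samples at each query. Gradient similarity: $\frac1n\sum_{i=1}^n\|\nabla f_i(\mathbf{x})-\nabla f(\mathbf{x})\|^2\le\zeta^2$ for all $\mathbf{x}$. Compressor: a (possibly randomized) map $\mathcal{C}:\mathbb{R}^d\to\mathbb{R}^d$ is $\delta$-contractive ($\delta\in(0,1]$) if $\mathbb{E}\|\mathcal{C}(\mathbf{x})-\mathbf{x}\|^2\le(1-\delta)\|\mathbf{x}\|^2$ for all $\mathbf{x}$. The repeated compressor $\mathcal{C}_R$ (integer $R\ge1$) is defined by $\mathbf{c}_0=\mathbf{0}$, $\Delta_q=\mathcal{C}(\mathbf{x}-\mathbf{c}_{q-1})$, $\mathbf{c}_q=\mathbf{c}_{q-1}+\Delta_q$ for $q=1,\dots,R$, and $\mathcal{C}_R(\mathbf{x}):=\sum_{q=1}^R\Delta_q$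 (each $\Delta_q$ is one communication round). It is known that $\mathbb{E}\|\mathcal{C}_R(\mathbf{x})-\mathbf{x}\|^2\le(1-\delta)^R\|\mathbf{x}\|^2$ for all $\mathbf{x}$; compressor randomness is independent of everything else. NEOLITHIC: given $\mathbf{x}_0,\mathbf{v}_0$, $A_0\ge0$ and $a_t>0$, for $t=0,1,\dots$: $A_{t+1}=A_t+a_{t+1}$; $\mathbf{y}_t=\frac{A_t}{A_{t+1}}\mathbf{x}_t+\frac{a_{t+1}}{A_{t+1}}\mathbf{v}_t$; each client $i$ computes $\mathbf{g}^i_t=\mathbf{g}_i(\mathbf{y}_t,\xi^i_t)$ and $\hat{\mathbf{g}}^i_t=\mathcal{C}_R(\mathbf{g}^i_t)$, sent to the server; server sets $\hat{\mathbf{g}}_t=\frac1n\sum_i\hat{\mathbf{g}}^i_t$, $\mathbf{v}_{t+1}=\mathbf{v}_t-a_{t+1}\hat{\mathbf{g}}_t$, $\mathbf{x}_{t+1}=\frac{A_t}{A_{t+1}}\mathbf{x}_t+\frac{a_{t+1}}{A_{t+1}}\mathbf{v}_{t+1}$. *)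

theory Defs
  imports "HOL-Probability.Probability"
begin

definition bregman :: "('a::real_inner \<Rightarrow> real) \<Rightarrow> ('a \<Rightarrow> 'a) \<Rightarrow> 'a \<Rightarrow> 'a \<Rightarrow> real" where
  "bregman f gf x y = f x - f y - inner (gf y) (x - y)"

text \<open>Repeated compressor. The seed s q is the randomness of the q-th
  application of the base compressor C (round q = 1..R).
  rep_c C s x q is c_q; rep_compress C R s x = c_R = sum of Delta_1..Delta_R.\<close>
primrec rep_c :: "('c \<Rightarrow> 'a::real_vector \<Rightarrow> 'a) \<Rightarrow> (nat \<Rightarrow> 'c) \<Rightarrow> 'a \<Rightarrow> nat \<Rightarrow> 'a" where
  "rep_c C s x 0 = 0"
| "rep_c C s x (Suc q) = rep_c C s x q + C (s (Suc q)) (x - rep_c C s x q)"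

definition rep_compress :: "('c \<Rightarrow> 'a::real_vector \<Rightarrow> 'a) \<Rightarrow> nat \<Rightarrow> (nat \<Rightarrow> 'c) \<Rightarrow> 'a \<Rightarrow> 'a" where
  "rep_compress C R s x = rep_c C s x R"

text \<open>NEOLITHIC, as a deterministic function of the realized samples.
  n clients (indices 0..n-1); g i y e is client i's stochastic gradient oracle at y with
  sample e; xi i t is the sample drawn by client i at iteration t; s i t is the
  randomness of the repeated compressor used by client i at iteration t;
  a (t+1) are the step weights. neo_st .. t = (x_t, v_t, A_t).\<close>
primrec neo_st :: "nat \<Rightarrow> (nat \<Rightarrow> 'a::real_vector \<Rightarrow> 'x \<Rightarrow> 'a) \<Rightarrow> ('c \<Rightarrow> 'a \<Rightarrow> 'a) \<Rightarrow> nat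
    \<Rightarrow> (nat \<Rightarrow> real) \<Rightarrow> real \<Rightarrow> 'a \<Rightarrow> 'a \<Rightarrow> (nat \<Rightarrow> nat \<Rightarrow> 'x) \<Rightarrow> (nat \<Rightarrow> nat \<Rightarrow> nat \<Rightarrow> 'c)
    \<Rightarrow> nat \<Rightarrow> 'a \<times> 'a \<times> real" where
  "neo_st n g C R a A0 x0 v0 xi s 0 = (x0, v0, A0)"
| "neo_st n g C R a A0 x0 v0 xi s (Suc t) =
     (let (x, v, A) = neo_st n g C R a A0 x0 v0 xi s t;
          A' = A + a (Suc t);
          y = (A / A') *\<^sub>R x + (a (Suc t) / A') *\<^sub>R v;
          gh = (1 / real n) *\<^sub>R (\<Sum>i<n. rep_compress C R (s i t) (g i y (xi i t)));
          v' = v - a (Suc t) *\<^sub>R gh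
      in ((A / A') *\<^sub>R x + (a (Suc t) / A') *\<^sub>R v', v', A'))"

definition neo_y :: "nat \<Rightarrow> (nat \<Rightarrow> 'a::real_vector \<Rightarrow> 'x \<Rightarrow> 'a) \<Rightarrow> ('c \<Rightarrow> 'a \<Rightarrow> 'a) \<Rightarrow> nat
    \<Rightarrow> (nat \<Rightarrow> real) \<Rightarrow> real \<Rightarrow> 'a \<Rightarrow> 'a \<Rightarrow> (nat \<Rightarrow> nat \<Rightarrow> 'x) \<Rightarrow> (nat \<Rightarrow> nat \<Rightarrow> nat \<Rightarrow> 'c)
    \<Rightarrow> nat \<Rightarrow> 'a" where
  "neo_y n g C R a A0 x0 v0 xi s t =
     (let (x, v, A) = neo_st n g C R a A0 x0 v0 xi s t;
          A' = A + a (Suc t)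
      in (A / A') *\<^sub>R x + (a (Suc t) / A') *\<^sub>R v)"

definition neo_g :: "nat \<Rightarrow> (nat \<Rightarrow> 'a::real_vector \<Rightarrow> 'x \<Rightarrow> 'a) \<Rightarrow> ('c \<Rightarrow> 'a \<Rightarrow> 'a) \<Rightarrow> nat
    \<Rightarrow> (nat \<Rightarrow> real) \<Rightarrow> real \<Rightarrow> 'a \<Rightarrow> 'a \<Rightarrow> (nat \<Rightarrow> nat \<Rightarrow> 'x) \<Rightarrow> (nat \<Rightarrow> nat \<Rightarrow> nat \<Rightarrow> 'c)
    \<Rightarrow> nat \<Rightarrow> nat \<Rightarrow> 'a" where
  "neo_g n g C R a A0 x0 v0 xi s i t = g i (neo_y n g C R a A0 x0 v0 xi s t) (xi i t)"

definition neo_ghat :: "nat \<Rightarrow> (nat \<Rightarrow> 'a::real_vector \<Rightarrow> 'x \<Rightarrow> 'a) \<Rightarrow> ('c \<Rightarrow> 'a \<Rightarrow> 'a) \<Rightarrow> nat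
    \<Rightarrow> (nat \<Rightarrow> real) \<Rightarrow> real \<Rightarrow> 'a \<Rightarrow> 'a \<Rightarrow> (nat \<Rightarrow> nat \<Rightarrow> 'x) \<Rightarrow> (nat \<Rightarrow> nat \<Rightarrow> nat \<Rightarrow> 'c)
    \<Rightarrow> nat \<Rightarrow> nat \<Rightarrow> 'a" where
  "neo_ghat n g C R a A0 x0 v0 xi s i t =
     rep_compress C R (s i t) (neo_g n g C R a A0 x0 v0 xi s i t)"

end

theory Submission
  imports Defs
begin

(*
  Write E_{t+1} as the expectation of the squared norm of
  sum_{j<t} a_{j+1} (1/n) sum_i (g^i_j - hat g^i_j).  Two applications of Cauchy-Schwarz bound it by
  (t/n) sum_j a_{j+1}^2 sum_i E|g^i_j - hat g^i_j|^2.  The query point y_j depends only on the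
  samples drawn before iteration j, so it is independent of the fresh sample and compressor
  randomness of iteration j; conditionally on y_j the compression error is therefore at most
  (1-delta)^R E|g^i_j|^2 <= (1-delta)^R (|grad f_i(y_j)|^2 + sigma^2).  Finally
  sum_i |grad f_i(y)|^2 = sum_i |grad f_i(y) - grad f(y)|^2 + n |grad f(y)|^2
    <= n (zeta^2 + 2 L (f y - f xstar)),
  and f y - f xstar is the Bregman divergence beta_f(y, xstar) because grad f(xstar) = 0.
*)

lemma norm_sum_squared_le:
  fixes v :: "'i \<Rightarrow> 'a::real_normed_vector"
  shows "(norm (\<Sum>j\<in>I. v j))\<^sup>2 \<le> real (card I) * (\<Sum>j\<in>I. (norm (v j))\<^sup>2)"
proof -
  have "(norm (\<Sum>j\<in>I. v j))\<^sup>2 \<le> (\<Sum>j\<in>I. norm (v j))\<^sup>2"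
    by (intro power_mono norm_sum) auto
  also have "\<dots> \<le> (\<Sum>j\<in>I. (norm (v j))\<^sup>2) * card I"
    by (rule sum_squared_le_sum_of_squares)
  finally show ?thesis by (simp add: mult.commute)
qed

lemma sum_norm_sq_deviation_eq:
  fixes v :: "nat \<Rightarrow> 'a::real_inner"
  assumes "n > 0"
  defines "m \<equiv> (1 / real n) *\<^sub>R (\<Sum>i<n. v i)"
  shows "(\<Sum>i<n. (norm (v i - m))\<^sup>2) = (\<Sum>i<n. (norm (v i))\<^sup>2) - real n * (norm m)\<^sup>2"
proof -
  have sum_eq: "(\<Sum>i<n. v i) = real n *\<^sub>R m"
    using assms by (simp add: m_def)
  have "(\<Sum>i<n. (norm (v i - m))\<^sup>2) = (\<Sum>i<n. (norm (v i))\<^sup>2 - 2 * inner (v i) m + (norm m)\<^sup>2)"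
    by (intro sum.cong refl)
      (simp add: power2_norm_eq_inner inner_diff_left inner_diff_right inner_commute)
  also have "\<dots> = (\<Sum>i<n. (norm (v i))\<^sup>2) - 2 * inner (\<Sum>i<n. v i) m + real n * (norm m)\<^sup>2"
    by (simp add: sum.distrib sum_subtractf inner_sum_left sum_distrib_left)
  finally show ?thesis
    unfolding sum_eq by (simp add: power2_norm_eq_inner)
qed

lemma lipschitz_gradient_quadratic_upper_bound:
  fixes f :: "'a::real_inner \<Rightarrow> real"
  assumes der: "\<And>x. (f has_derivative (\<lambda>h. inner (gf x) h)) (at x)"
    and lip: "\<And>x y. norm (gf x - gf y) \<le> L * norm (x - y)"
  shows "f (y + h) \<le> f y + inner (gf y) h + L / 2 * (norm h)\<^sup>2"
proof -
  define \<phi> where "\<phi> t = f (y + t *\<^sub>R h) - t * inner (gf y) h - L / 2 * t\<^sup>2 * (norm h)\<^sup>2" for t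
  have "\<phi> 1 \<le> \<phi> 0"
  proof (rule DERIV_nonpos_imp_nonincreasing[where f=\<phi>])
    fix t :: real assume t: "0 \<le> t" "t \<le> 1"
    have "((\<lambda>t. f (y + t *\<^sub>R h)) has_derivative (\<lambda>s. inner (gf (y + t *\<^sub>R h)) (s *\<^sub>R h))) (at t)"
      by (rule has_derivative_compose[OF _ der]) (auto intro!: derivative_eq_intros)
    then have "((\<lambda>t. f (y + t *\<^sub>R h)) has_real_derivative inner (gf (y + t *\<^sub>R h)) h) (at t)"
      by (simp add: has_field_derivative_def mult_commute_abs)
    then have "(\<phi> has_real_derivative
        inner (gf (y + t *\<^sub>R h) - gf y) h - L * t * (norm h)\<^sup>2) (at t)"
      unfolding \<phi>_def[abs_def] by (auto intro!: derivative_eq_intros simp: inner_diff_left)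
    moreover have "inner (gf (y + t *\<^sub>R h) - gf y) h \<le> L * t * (norm h)\<^sup>2"
    proof -
      have "inner (gf (y + t *\<^sub>R h) - gf y) h \<le> norm (gf (y + t *\<^sub>R h) - gf y) * norm h"
        by (rule norm_cauchy_schwarz)
      also have "\<dots> \<le> L * norm (t *\<^sub>R h) * norm h"
        using lip[of "y + t *\<^sub>R h" y] by (intro mult_right_mono) auto
      finally show ?thesis
        using t by (simp add: power2_eq_square mult_ac)
    qed
    ultimately show "\<exists>D. (\<phi> has_real_derivative D) (at t) \<and> D \<le> 0"
      by (intro exI conjI) auto
  qed simp
  then show ?thesis
    unfolding \<phi>_def by simp
qed

lemma gradient_at_minimizer_eq_0:
  fixes f :: "'a::real_inner \<Rightarrow> real"
  assumes "(f has_derivative (\<lambda>h. inner g h)) (at x)" and "\<And>y. f x \<le> f y"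
  shows "g = 0"
proof -
  have "(\<lambda>h. inner g h) = (\<lambda>h. 0)"
    using assms by (intro has_derivative_local_min) auto
  then show ?thesis
    by (metis inner_eq_zero_iff)
qed

lemma lipschitz_const_nonneg:
  fixes gf :: "'a::euclidean_space \<Rightarrow> 'b::real_normed_vector"
  assumes "\<And>x y. norm (gf x - gf y) \<le> L * norm (x - y)"
  shows "0 \<le> L"
proof -
  obtain b :: 'a where "b \<in> Basis"
    using nonempty_Basis by blast
  moreover have "0 \<le> L * norm (b - 0)"
    using assms[of b 0] norm_ge_zero order_trans by blast
  ultimately show ?thesis
    by (simp add: zero_le_mult_iff)
qed

lemma lipschitz_gradient_norm_sq_le:
  fixes f :: "'a::euclidean_space \<Rightarrow> real"
  assumes der: "\<And>x. (f has_derivative (\<lambda>h. inner (gf x) h)) (at x)"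
    and lip: "\<And>x y. norm (gf x - gf y) \<le> L * norm (x - y)"
    and min: "\<And>x. f xstar \<le> f x"
  shows "(norm (gf y))\<^sup>2 \<le> 2 * L * (f y - f xstar)"
proof (cases "L = 0")
  case True
  have "gf xstar = 0"
    using der min by (rule gradient_at_minimizer_eq_0)
  with lip[of y xstar] True show ?thesis
    by simp
next
  case False
  then have L: "L > 0"
    using lipschitz_const_nonneg[OF lip] by simp
  \<comment> \<open>one gradient step of length 1/L from y cannot go below the minimum\<close>
  have "f xstar \<le> f (y + (- (1 / L)) *\<^sub>R gf y)"
    by (rule min)
  also have "\<dots> \<le> f y + inner (gf y) ((- (1 / L)) *\<^sub>R gf y) + L / 2 * (norm ((- (1 / L)) *\<^sub>R gf y))\<^sup>2"
    by (rule lipschitz_gradient_quadratic_upper_bound[OF der lip])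
  also have "\<dots> = f y - (norm (gf y))\<^sup>2 / (2 * L)"
    using L by (simp add: power2_norm_eq_inner power2_eq_square field_simps flip: power2_norm_eq_inner)
  finally show ?thesis
    using L by (simp add: field_simps)
qed

lemma has_derivative_average:
  assumes "\<And>i. i < n \<Longrightarrow> (fi i has_derivative (\<lambda>h. inner (gfi i x) h)) (at x)"
  shows "((\<lambda>x. (\<Sum>i<n. fi i x) / real n) has_derivative
      (\<lambda>h. inner ((1 / real n) *\<^sub>R (\<Sum>i<n. gfi i x)) h)) (at x)"
proof -
  have "((\<lambda>x. (\<Sum>i<n. fi i x) / real n) has_derivative (\<lambda>h. (\<Sum>i<n. inner (gfi i x) h) / real n))
      (at x)"
    using assms by (cases "n = 0") (auto intro!: derivative_eq_intros)
  then show ?thesis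
    by (simp add: inner_sum_left)
qed

lemma norm_sq_sum_scaled_mean_diff_le:
  fixes G H :: "nat \<Rightarrow> nat \<Rightarrow> 'a::real_normed_vector"
  assumes "n > 0"
  shows "(norm (\<Sum>j<t. \<alpha> j *\<^sub>R ((1 / real n) *\<^sub>R (\<Sum>i<n. G i j) - (1 / real n) *\<^sub>R (\<Sum>i<n. H i j))))\<^sup>2
    \<le> (\<Sum>j<t. \<Sum>i<n. (real t * (\<alpha> j)\<^sup>2 / real n) * (norm (G i j - H i j))\<^sup>2)"
proof -
  have mean_le: "(norm ((1 / real n) *\<^sub>R (\<Sum>i<n. G i j - H i j)))\<^sup>2
      \<le> (1 / real n) * (\<Sum>i<n. (norm (G i j - H i j))\<^sup>2)" for j
  proof -
    have "(norm ((1 / real n) *\<^sub>R (\<Sum>i<n. G i j - H i j)))\<^sup>2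
        = (1 / real n)\<^sup>2 * (norm (\<Sum>i<n. G i j - H i j))\<^sup>2"
      by (simp add: power_divide)
    also have "\<dots> \<le> (1 / real n)\<^sup>2 * (real n * (\<Sum>i<n. (norm (G i j - H i j))\<^sup>2))"
      using norm_sum_squared_le[of "\<lambda>i. G i j - H i j" "{..<n}"] by (intro mult_left_mono) auto
    finally show ?thesis
      using assms by (simp add: power2_eq_square)
  qed
  have mean_diff: "(1 / real n) *\<^sub>R (\<Sum>i<n. G i j) - (1 / real n) *\<^sub>R (\<Sum>i<n. H i j)
      = (1 / real n) *\<^sub>R (\<Sum>i<n. G i j - H i j)" for j
    by (simp add: sum_subtractf scaleR_diff_right)
  have "(norm (\<Sum>j<t. \<alpha> j *\<^sub>R ((1 / real n) *\<^sub>R (\<Sum>i<n. G i j) - (1 / real n) *\<^sub>R (\<Sum>i<n. H i j))))\<^sup>2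
      \<le> real t * (\<Sum>j<t. (norm (\<alpha> j *\<^sub>R ((1 / real n) *\<^sub>R (\<Sum>i<n. G i j - H i j))))\<^sup>2)"
    unfolding mean_diff by (rule norm_sum_squared_le[of _ "{..<t}", simplified])
  also have "\<dots> \<le> real t * (\<Sum>j<t. (\<alpha> j)\<^sup>2 * ((1 / real n) * (\<Sum>i<n. (norm (G i j - H i j))\<^sup>2)))"
  proof (intro mult_left_mono sum_mono)
    fix j
    show "(norm (\<alpha> j *\<^sub>R ((1 / real n) *\<^sub>R (\<Sum>i<n. G i j - H i j))))\<^sup>2
        \<le> (\<alpha> j)\<^sup>2 * ((1 / real n) * (\<Sum>i<n. (norm (G i j - H i j))\<^sup>2))"
      unfolding norm_scaleR[of "\<alpha> j"] power_mult_distrib power2_abs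
      by (intro mult_left_mono mean_le) simp
  qed simp
  also have "\<dots> = (\<Sum>j<t. \<Sum>i<n. (real t * (\<alpha> j)\<^sup>2 / real n) * (norm (G i j - H i j))\<^sup>2)"
    by (simp add: sum_distrib_left mult_ac)
  finally show ?thesis .
qed

lemma weighted_sum_regroup_ennreal:
  fixes W b :: "nat \<Rightarrow> real" and B :: "nat \<Rightarrow> ennreal"
  assumes W: "\<And>t. t < T \<Longrightarrow> 0 \<le> W t" and b: "\<And>j. 0 \<le> b j"
    and c: "0 \<le> c" and p: "0 \<le> p" and q: "0 \<le> q" and r: "0 \<le> r"
  shows "(\<Sum>t<T. ennreal (W t) * (\<Sum>j<t. ennreal (c * real t * b j) * (ennreal p + ennreal r * B j + ennreal q)))
    = ennreal (c * p * (\<Sum>t<T. W t * real t * (\<Sum>j<t. b j)))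
      + ennreal (r * c) * (\<Sum>t<T. ennreal (W t * real t) * (\<Sum>j<t. ennreal (b j) * B j))
      + ennreal (c * q * (\<Sum>t<T. W t * real t * (\<Sum>j<t. b j)))"
proof -
  have summand: "ennreal (W t) * (ennreal (c * real t * b j) * (ennreal p + ennreal r * B j + ennreal q))
      = ennreal (c * p * (W t * real t * b j)) + ennreal (r * c) * (ennreal (W t * real t) * (ennreal (b j) * B j))
        + ennreal (c * q * (W t * real t * b j))" if "t < T" for t j
    using W[OF that] b[of j] c p q r
    by (simp add: ennreal_mult distrib_left mult_ac)
  have real_sum: "(\<Sum>t<T. \<Sum>j<t. ennreal (x * (W t * real t * b j))) = ennreal (x * (\<Sum>t<T. W t * real t * (\<Sum>j<t. b j)))"
    if "0 \<le> x" for x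
  proof -
    have nonneg: "0 \<le> x * (W t * real t * b j)" if "t < T" for t j
      using \<open>0 \<le> x\<close> W[OF that] b[of j] by simp
    have "(\<Sum>t<T. \<Sum>j<t. ennreal (x * (W t * real t * b j)))
        = (\<Sum>t<T. ennreal (\<Sum>j<t. x * (W t * real t * b j)))"
      using nonneg by (intro sum.cong refl sum_ennreal) auto
    also have "\<dots> = ennreal (\<Sum>t<T. \<Sum>j<t. x * (W t * real t * b j))"
      using nonneg by (intro sum_ennreal sum_nonneg) auto
    finally show ?thesis
      by (simp add: sum_distrib_left mult_ac)
  qed
  have "(\<Sum>t<T. ennreal (W t) * (\<Sum>j<t. ennreal (c * real t * b j) * (ennreal p + ennreal r * B j + ennreal q)))
      = (\<Sum>t<T. \<Sum>j<t. ennreal (c * p * (W t * real t * b j))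
          + ennreal (r * c) * (ennreal (W t * real t) * (ennreal (b j) * B j))
          + ennreal (c * q * (W t * real t * b j)))"
    by (intro sum.cong refl) (simp add: sum_distrib_left summand)
  also have "\<dots> = (\<Sum>t<T. \<Sum>j<t. ennreal (c * p * (W t * real t * b j)))
      + ennreal (r * c) * (\<Sum>t<T. \<Sum>j<t. ennreal (W t * real t) * (ennreal (b j) * B j))
      + (\<Sum>t<T. \<Sum>j<t. ennreal (c * q * (W t * real t * b j)))"
    by (simp add: sum.distrib sum_distrib_left)
  finally show ?thesis
    using c p q by (simp add: real_sum sum_distrib_left)
qed

lemma nn_integral_norm_sq_le_mean_variance:
  fixes G :: "'x \<Rightarrow> 'a::{real_inner, banach, second_countable_topology}"
  assumes D: "prob_space D" and mean: "has_bochner_integral D G m"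
    and var: "(\<integral>\<^sup>+ e. ennreal ((norm (G e - m))\<^sup>2) \<partial>D) \<le> ennreal (\<sigma>\<^sup>2)"
  shows "(\<integral>\<^sup>+ e. ennreal ((norm (G e))\<^sup>2) \<partial>D) \<le> ennreal ((norm m)\<^sup>2 + \<sigma>\<^sup>2)"
proof -
  interpret prob_space D by (rule D)
  have intG: "integrable D G" and intG_eq: "integral\<^sup>L D G = m"
    using mean by (auto simp: integrable.simps has_bochner_integral_integral_eq)
  then have [measurable]: "G \<in> borel_measurable D"
    by auto
  define V where "V e = (norm (G e - m))\<^sup>2" for e
  have intV: "integrable D V"
  proof (rule integrableI_nonneg)
    show "V \<in> borel_measurable D"
      unfolding V_def by measurable
    show "(\<integral>\<^sup>+ x. ennreal (V x) \<partial>D) < \<infinity>"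
      using var by (simp add: V_def order_le_less_trans)
  qed (simp_all add: V_def)
  have "ennreal (integral\<^sup>L D V) = (\<integral>\<^sup>+ x. ennreal (V x) \<partial>D)"
    by (rule nn_integral_eq_integral[symmetric, OF intV]) (simp add: V_def)
  also have "\<dots> \<le> ennreal (\<sigma>\<^sup>2)"
    using var by (simp add: V_def)
  finally have intV_le: "integral\<^sup>L D V \<le> \<sigma>\<^sup>2"
    by simp
  have expand: "(norm (G e))\<^sup>2 = (norm m)\<^sup>2 + 2 * inner m (G e - m) + V e" for e
    by (simp add: V_def power2_norm_eq_inner inner_commute algebra_simps)
  have int_cross: "integrable D (\<lambda>e. inner m (G e - m))"
    and cross_eq: "(\<integral>e. inner m (G e - m) \<partial>D) = 0"
    using intG intG_eq by (auto simp: integral_diff prob_space)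
  have "(\<integral>\<^sup>+ e. ennreal ((norm (G e))\<^sup>2) \<partial>D)
      = (\<integral>\<^sup>+ e. ennreal ((norm m)\<^sup>2 + 2 * inner m (G e - m) + V e) \<partial>D)"
    by (simp add: expand)
  also have "\<dots> = ennreal (\<integral>e. (norm m)\<^sup>2 + 2 * inner m (G e - m) + V e \<partial>D)"
  proof (rule nn_integral_eq_integral)
    show "integrable D (\<lambda>e. (norm m)\<^sup>2 + 2 * inner m (G e - m) + V e)"
      using int_cross intV by auto
  qed (simp flip: expand)
  also have "\<dots> = ennreal ((norm m)\<^sup>2 + integral\<^sup>L D V)"
    using int_cross intV cross_eq by (simp add: prob_space)
  also have "\<dots> \<le> ennreal ((norm m)\<^sup>2 + \<sigma>\<^sup>2)"
    using intV_le by (intro ennreal_leI) simp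
  finally show ?thesis .
qed

lemma nn_integral_compression_error_le:
  fixes G :: "'x \<Rightarrow> 'a::{real_inner, banach, second_countable_topology}"
    and K :: "'u \<Rightarrow> 'a \<Rightarrow> 'a"
  assumes D: "prob_space D" and Q: "prob_space Q"
    and mean: "has_bochner_integral D G m"
    and var: "(\<integral>\<^sup>+ e. ennreal ((norm (G e - m))\<^sup>2) \<partial>D) \<le> ennreal (\<sigma>\<^sup>2)"
    and K_meas: "(\<lambda>(u, x). K u x) \<in> borel_measurable (Q \<Otimes>\<^sub>M borel)"
    and K_contr: "\<And>x. (\<integral>\<^sup>+ u. ennreal ((norm (K u x - x))\<^sup>2) \<partial>Q) \<le> ennreal (\<rho> * (norm x)\<^sup>2)"
    and \<rho>: "0 \<le> \<rho>"
  shows "(\<integral>\<^sup>+ z. ennreal ((norm (G (fst z) - K (snd z) (G (fst z))))\<^sup>2) \<partial>(D \<Otimes>\<^sub>M Q))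
     \<le> ennreal \<rho> * ennreal ((norm m)\<^sup>2 + \<sigma>\<^sup>2)"
proof -
  interpret Q: prob_space Q by (rule Q)
  have G_meas[measurable]: "G \<in> borel_measurable D"
    using mean by (auto simp: integrable.simps)
  have "(\<lambda>z. K (snd z) (G (fst z))) \<in> borel_measurable (D \<Otimes>\<^sub>M Q)"
    using measurable_compose[OF _ K_meas, of "\<lambda>z. (snd z, G (fst z))"] by simp
  then have "(\<integral>\<^sup>+ z. ennreal ((norm (G (fst z) - K (snd z) (G (fst z))))\<^sup>2) \<partial>(D \<Otimes>\<^sub>M Q))
      = (\<integral>\<^sup>+ e. \<integral>\<^sup>+ u. ennreal ((norm (K u (G e) - G e))\<^sup>2) \<partial>Q \<partial>D)"
    by (subst Q.nn_integral_fst[symmetric]) (auto simp: norm_minus_commute)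
  also have "\<dots> \<le> (\<integral>\<^sup>+ e. ennreal \<rho> * ennreal ((norm (G e))\<^sup>2) \<partial>D)"
    using K_contr \<rho> by (intro nn_integral_mono) (simp add: ennreal_mult)
  also have "\<dots> = ennreal \<rho> * (\<integral>\<^sup>+ e. ennreal ((norm (G e))\<^sup>2) \<partial>D)"
    by (rule nn_integral_cmult) measurable
  also have "\<dots> \<le> ennreal \<rho> * ennreal ((norm m)\<^sup>2 + \<sigma>\<^sup>2)"
    by (intro mult_left_mono nn_integral_norm_sq_le_mean_variance[OF D mean var]) simp
  finally show ?thesis .
qed

lemma nn_integral_product_law:
  assumes X[measurable]: "X \<in> measurable M S" and Y[measurable]: "Y \<in> measurable M T"
    and T: "sigma_finite_measure T"
    and joint: "distr M (S \<Otimes>\<^sub>M T) (\<lambda>\<omega>. (X \<omega>, Y \<omega>)) = distr M S X \<Otimes>\<^sub>M T"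
    and h: "h \<in> borel_measurable (S \<Otimes>\<^sub>M T)"
  shows "(\<integral>\<^sup>+ \<omega>. h (X \<omega>, Y \<omega>) \<partial>M) = (\<integral>\<^sup>+ \<omega>. (\<integral>\<^sup>+ z. h (X \<omega>, z) \<partial>T) \<partial>M)"
proof -
  interpret T: sigma_finite_measure T by (rule T)
  have h': "h \<in> borel_measurable (distr M S X \<Otimes>\<^sub>M T)"
    using h by (simp cong: measurable_cong_sets)
  have "(\<integral>\<^sup>+ \<omega>. h (X \<omega>, Y \<omega>) \<partial>M) = integral\<^sup>N (distr M (S \<Otimes>\<^sub>M T) (\<lambda>\<omega>. (X \<omega>, Y \<omega>))) h"
    by (rule nn_integral_distr[symmetric]) (use h in simp_all)
  also have "\<dots> = (\<integral>\<^sup>+ x. (\<integral>\<^sup>+ z. h (x, z) \<partial>T) \<partial>distr M S X)"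
    unfolding joint by (rule T.nn_integral_fst[OF h', symmetric])
  also have "\<dots> = (\<integral>\<^sup>+ \<omega>. (\<integral>\<^sup>+ z. h (X \<omega>, z) \<partial>T) \<partial>M)"
    by (rule nn_integral_distr) (use T.borel_measurable_nn_integral_fst[OF h] in simp_all)
  finally show ?thesis .
qed

lemma neo_st_cong:
  assumes "\<And>i t'. i < n \<Longrightarrow> t' < t \<Longrightarrow> xi i t' = xi' i t' \<and> s i t' = s' i t'"
  shows "neo_st n g C R a A0 x0 v0 xi s t = neo_st n g C R a A0 x0 v0 xi' s' t"
  using assms
proof (induction t)
  case (Suc t)
  then have "neo_st n g C R a A0 x0 v0 xi s t = neo_st n g C R a A0 x0 v0 xi' s' t"
    by simp
  moreover have "(\<Sum>i<n. rep_compress C R (s i t) (g i y (xi i t)))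
      = (\<Sum>i<n. rep_compress C R (s' i t) (g i y (xi' i t)))" for y
    using Suc.prems by (intro sum.cong) auto
  ultimately show ?case
    by (simp add: Let_def split_beta)
qed simp

lemma neo_y_cong:
  assumes "\<And>i t'. i < n \<Longrightarrow> t' < t \<Longrightarrow> xi i t' = xi' i t' \<and> s i t' = s' i t'"
  shows "neo_y n g C R a A0 x0 v0 xi s t = neo_y n g C R a A0 x0 v0 xi' s' t"
proof -
  have "neo_st n g C R a A0 x0 v0 xi s t = neo_st n g C R a A0 x0 v0 xi' s' t"
    by (rule neo_st_cong) (use assms in simp)
  then show ?thesis
    by (simp add: neo_y_def)
qed

lemma measurable_neo_st:
  fixes g :: "nat \<Rightarrow> 'a::euclidean_space \<Rightarrow> 'x \<Rightarrow> 'a"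
  assumes g_meas: "\<And>i. i < n \<Longrightarrow> (\<lambda>(y, e). g i y e) \<in> borel_measurable (borel \<Otimes>\<^sub>M D i)"
    and CR_meas: "(\<lambda>(u, x). rep_compress C R u x) \<in> borel_measurable (Q \<Otimes>\<^sub>M borel)"
    and sample_meas: "\<And>i t'. i < n \<Longrightarrow> t' < t \<Longrightarrow>
      (\<lambda>\<omega>. (XI \<omega> i t', SI \<omega> i t')) \<in> measurable N (D i \<Otimes>\<^sub>M Q)"
  shows "(\<lambda>\<omega>. fst (neo_st n g C R a A0 x0 v0 (XI \<omega>) (SI \<omega>) t)) \<in> borel_measurable N
    \<and> (\<lambda>\<omega>. fst (snd (neo_st n g C R a A0 x0 v0 (XI \<omega>) (SI \<omega>) t))) \<in> borel_measurable N
    \<and> (\<lambda>\<omega>. snd (snd (neo_st n g C R a A0 x0 v0 (XI \<omega>) (SI \<omega>) t))) \<in> borel_measurable N"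
  using sample_meas
proof (induction t)
  case (Suc t)
  define X where "X \<omega> = fst (neo_st n g C R a A0 x0 v0 (XI \<omega>) (SI \<omega>) t)" for \<omega>
  define V where "V \<omega> = fst (snd (neo_st n g C R a A0 x0 v0 (XI \<omega>) (SI \<omega>) t))" for \<omega>
  define A where "A \<omega> = snd (snd (neo_st n g C R a A0 x0 v0 (XI \<omega>) (SI \<omega>) t))" for \<omega>
  have "X \<in> borel_measurable N \<and> V \<in> borel_measurable N \<and> A \<in> borel_measurable N"
    unfolding X_def V_def A_def by (rule Suc.IH) (use Suc.prems in simp)
  then have [measurable]: "X \<in> borel_measurable N" "V \<in> borel_measurable N" "A \<in> borel_measurable N"
    by simp_all
  define Y where "Y \<omega> = (A \<omega> / (A \<omega> + a (Suc t))) *\<^sub>R X \<omega> + (a (Suc t) / (A \<omega> + a (Suc t))) *\<^sub>R V \<omega>"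
    for \<omega>
  have Y_meas: "Y \<in> borel_measurable N"
    unfolding Y_def by measurable
  have "(\<lambda>\<omega>. rep_compress C R (SI \<omega> i t) (g i (Y \<omega>) (XI \<omega> i t))) \<in> borel_measurable N"
    if i: "i < n" for i
  proof -
    have sample: "(\<lambda>\<omega>. (XI \<omega> i t, SI \<omega> i t)) \<in> measurable N (D i \<Otimes>\<^sub>M Q)"
      using Suc.prems i by simp
    have "(\<lambda>\<omega>. g i (Y \<omega>) (XI \<omega> i t)) \<in> borel_measurable N"
      using measurable_compose[OF measurable_Pair[OF Y_meas measurable_compose[OF sample measurable_fst]]
          g_meas[OF i]]
      by simp
    from measurable_compose[OF measurable_Pair[OF measurable_compose[OF sample measurable_snd] this]
        CR_meas]
    show ?thesis
      by simp
  qed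
  then have [measurable]: "(\<lambda>\<omega>. \<Sum>i<n. rep_compress C R (SI \<omega> i t) (g i (Y \<omega>) (XI \<omega> i t)))
      \<in> borel_measurable N"
    by (intro borel_measurable_sum) auto
  show ?case
    by (simp add: Let_def split_beta flip: X_def V_def A_def Y_def)
qed simp

lemma measurable_neo_y:
  fixes g :: "nat \<Rightarrow> 'a::euclidean_space \<Rightarrow> 'x \<Rightarrow> 'a"
  assumes g_meas: "\<And>i. i < n \<Longrightarrow> (\<lambda>(y, e). g i y e) \<in> borel_measurable (borel \<Otimes>\<^sub>M D i)"
    and CR_meas: "(\<lambda>(u, x). rep_compress C R u x) \<in> borel_measurable (Q \<Otimes>\<^sub>M borel)"
    and sample_meas: "\<And>i t'. i < n \<Longrightarrow> t' < t \<Longrightarrow>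
      (\<lambda>\<omega>. (XI \<omega> i t', SI \<omega> i t')) \<in> measurable N (D i \<Otimes>\<^sub>M Q)"
  shows "(\<lambda>\<omega>. neo_y n g C R a A0 x0 v0 (XI \<omega>) (SI \<omega>) t) \<in> borel_measurable N"
proof -
  note [measurable] = measurable_neo_st[OF g_meas CR_meas sample_meas, THEN conjunct1]
    measurable_neo_st[OF g_meas CR_meas sample_meas, THEN conjunct2, THEN conjunct1]
    measurable_neo_st[OF g_meas CR_meas sample_meas, THEN conjunct2, THEN conjunct2]
  show ?thesis
    unfolding neo_y_def by (simp add: Let_def split_beta)
qed

locale neolithic = prob_space M for M :: "'m measure" +
  fixes n :: nat
    and gfi :: "nat \<Rightarrow> 'a::euclidean_space \<Rightarrow> 'a"
    and f :: "'a \<Rightarrow> real" and gf :: "'a \<Rightarrow> 'a"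
    and L \<sigma> \<zeta> \<delta> :: real and R :: nat and xstar :: 'a
    and g :: "nat \<Rightarrow> 'a \<Rightarrow> 'x \<Rightarrow> 'a" and D :: "nat \<Rightarrow> 'x measure"
    and C :: "'c \<Rightarrow> 'a \<Rightarrow> 'a" and Q :: "(nat \<Rightarrow> 'c) measure"
    and \<xi> :: "nat \<Rightarrow> nat \<Rightarrow> 'm \<Rightarrow> 'x" and s :: "nat \<Rightarrow> nat \<Rightarrow> 'm \<Rightarrow> nat \<Rightarrow> 'c"
    and a :: "nat \<Rightarrow> real" and A0 :: real and x0 v0 :: 'a
  assumes n_pos: "n > 0"
    and f_grad: "\<And>x. (f has_derivative (\<lambda>h. inner (gf x) h)) (at x)"
    and gf_avg: "gf = (\<lambda>x. (1 / real n) *\<^sub>R (\<Sum>i<n. gfi i x))"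
    and f_smooth: "\<And>x y. norm (gf x - gf y) \<le> L * norm (x - y)"
    and xstar_min: "\<And>x. f xstar \<le> f x"
    and similarity: "\<And>x. (\<Sum>i<n. (norm (gfi i x - gf x))\<^sup>2) / real n \<le> \<zeta>\<^sup>2"
    and D_prob: "\<And>i. i < n \<Longrightarrow> prob_space (D i)"
    and g_meas: "\<And>i. i < n \<Longrightarrow> (\<lambda>(y, e). g i y e) \<in> borel_measurable (borel \<Otimes>\<^sub>M D i)"
    and unbiased: "\<And>i x. i < n \<Longrightarrow> has_bochner_integral (D i) (\<lambda>e. g i x e) (gfi i x)"
    and variance: "\<And>i x. i < n \<Longrightarrow>
        (\<integral>\<^sup>+ e. ennreal ((norm (g i x e - gfi i x))\<^sup>2) \<partial>D i) \<le> ennreal (\<sigma>\<^sup>2)"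
    and delta_le_1: "\<delta> \<le> 1"
    and Q_prob: "prob_space Q"
    and CR_meas: "(\<lambda>(u, x). rep_compress C R u x) \<in> borel_measurable (Q \<Otimes>\<^sub>M borel)"
    and CR_contr: "\<And>x. (\<integral>\<^sup>+ u. ennreal ((norm (rep_compress C R u x - x))\<^sup>2) \<partial>Q)
                       \<le> ennreal ((1 - \<delta>) ^ R * (norm x)\<^sup>2)"
    and indep: "indep_vars (\<lambda>(i, t). D i \<Otimes>\<^sub>M Q) (\<lambda>(i, t) \<omega>. (\<xi> i t \<omega>, s i t \<omega>))
                  ({..<n} \<times> UNIV)"
    and laws: "\<And>i t. i < n \<Longrightarrow> distr M (D i \<Otimes>\<^sub>M Q) (\<lambda>\<omega>. (\<xi> i t \<omega>, s i t \<omega>)) = D i \<Otimes>\<^sub>M Q"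
begin

abbreviation Y :: "nat \<Rightarrow> 'm \<Rightarrow> 'a" where
  "Y j \<omega> \<equiv> neo_y n g C R a A0 x0 v0 (\<lambda>i t. \<xi> i t \<omega>) (\<lambda>i t. s i t \<omega>) j"

abbreviation stoch_grad :: "nat \<Rightarrow> nat \<Rightarrow> 'm \<Rightarrow> 'a" where
  "stoch_grad i j \<omega> \<equiv> neo_g n g C R a A0 x0 v0 (\<lambda>i t. \<xi> i t \<omega>) (\<lambda>i t. s i t \<omega>) i j"

abbreviation compressed_grad :: "nat \<Rightarrow> nat \<Rightarrow> 'm \<Rightarrow> 'a" where
  "compressed_grad i j \<omega> \<equiv> neo_ghat n g C R a A0 x0 v0 (\<lambda>i t. \<xi> i t \<omega>) (\<lambda>i t. s i t \<omega>) i j"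

abbreviation expected_bregman :: "nat \<Rightarrow> ennreal" where
  "expected_bregman j \<equiv> \<integral>\<^sup>+ \<omega>. ennreal (bregman f gf (Y j \<omega>) xstar) \<partial>M"

definition compression_error :: "nat \<Rightarrow> 'a \<Rightarrow> ennreal" where
  "compression_error i y = (\<integral>\<^sup>+ z. ennreal ((norm (g i y (fst z) - rep_compress C R (snd z) (g i y (fst z))))\<^sup>2)
    \<partial>(D i \<Otimes>\<^sub>M Q))"

lemma L_nonneg: "0 \<le> L"
  using f_smooth by (rule lipschitz_const_nonneg)

lemma bregman_xstar: "bregman f gf y xstar = f y - f xstar"
  using gradient_at_minimizer_eq_0[OF f_grad xstar_min] by (simp add: bregman_def)

lemma bregman_nonneg: "0 \<le> bregman f gf y xstar"
  using xstar_min[of y] by (simp add: bregman_xstar)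

lemma sum_norm_sq_gfi_le: "(\<Sum>i<n. (norm (gfi i y))\<^sup>2) \<le> real n * (\<zeta>\<^sup>2 + 2 * L * bregman f gf y xstar)"
proof -
  have "(\<Sum>i<n. (norm (gfi i y))\<^sup>2) = (\<Sum>i<n. (norm (gfi i y - gf y))\<^sup>2) + real n * (norm (gf y))\<^sup>2"
    using sum_norm_sq_deviation_eq[OF n_pos, of "\<lambda>i. gfi i y"] by (simp add: gf_avg)
  moreover have "(\<Sum>i<n. (norm (gfi i y - gf y))\<^sup>2) \<le> real n * \<zeta>\<^sup>2"
    using similarity[of y] n_pos by (simp add: field_simps)
  moreover have "real n * (norm (gf y))\<^sup>2 \<le> real n * (2 * L * bregman f gf y xstar)"
    using lipschitz_gradient_norm_sq_le[OF f_grad f_smooth xstar_min]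
    by (intro mult_left_mono) (simp_all add: bregman_xstar)
  ultimately show ?thesis
    by (simp add: algebra_simps)
qed

lemma measurable_bregman: "(\<lambda>y. bregman f gf y xstar) \<in> borel_measurable borel"
proof -
  have "continuous_on UNIV f"
    using f_grad by (intro continuous_at_imp_continuous_on ballI has_derivative_continuous) auto
  then have [measurable]: "f \<in> borel_measurable borel"
    by (rule borel_measurable_continuous_onI)
  show ?thesis
    unfolding bregman_def by measurable
qed

lemma measurable_sample: "i < n \<Longrightarrow> (\<lambda>\<omega>. (\<xi> i t \<omega>, s i t \<omega>)) \<in> measurable M (D i \<Otimes>\<^sub>M Q)"
  using indep unfolding indep_vars_def by auto

lemma measurable_Y: "Y j \<in> borel_measurable M"
  by (rule measurable_neo_y[OF g_meas CR_meas measurable_sample])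

lemma measurable_neo_y_past:
  "(\<lambda>u. neo_y n g C R a A0 x0 v0 (\<lambda>i t. fst (u (i, t))) (\<lambda>i t. snd (u (i, t))) j)
    \<in> borel_measurable (PiM ({..<n} \<times> {..<j}) (\<lambda>(i, t). D i \<Otimes>\<^sub>M Q))"
proof (rule measurable_neo_y[OF g_meas CR_meas])
  fix i t assume "i < n" "t < j"
  then have "(i, t) \<in> {..<n} \<times> {..<j}"
    by simp
  from measurable_component_singleton[OF this, of "\<lambda>(i, t). D i \<Otimes>\<^sub>M Q"]
  show "(\<lambda>u. (fst (u (i, t)), snd (u (i, t))))
      \<in> measurable (PiM ({..<n} \<times> {..<j}) (\<lambda>(i, t). D i \<Otimes>\<^sub>M Q)) (D i \<Otimes>\<^sub>M Q)"
    by simp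
qed

text \<open>The point y_j is a function of the samples of iterations before j, which are independent of
  the samples of iteration j.\<close>

lemma distr_Y_sample:
  assumes i: "i < n"
  shows "distr M (borel \<Otimes>\<^sub>M (D i \<Otimes>\<^sub>M Q)) (\<lambda>\<omega>. (Y j \<omega>, \<xi> i j \<omega>, s i j \<omega>))
    = distr M borel (Y j) \<Otimes>\<^sub>M (D i \<Otimes>\<^sub>M Q)"
proof -
  define M' where "M' = (\<lambda>(i::nat, t::nat). D i \<Otimes>\<^sub>M Q)"
  define K where "K = {..<n} \<times> {..<j}"
  define X where "X = (\<lambda>(i::nat, t::nat) \<omega>. (\<xi> i t \<omega>, s i t \<omega>))"
  define past where "past \<omega> = restrict (\<lambda>k. X k \<omega>) K" for \<omega>
  define now where "now \<omega> = restrict (\<lambda>k. X k \<omega>) {(i, j)}" for \<omega>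
  define Yf where "Yf u = neo_y n g C R a A0 x0 v0 (\<lambda>i t. fst (u (i, t))) (\<lambda>i t. snd (u (i, t))) j"
    for u :: "nat \<times> nat \<Rightarrow> 'x \<times> (nat \<Rightarrow> 'c)"
  have "indep_var (PiM K M') past (PiM {(i, j)} M') now"
    unfolding past_def now_def
    by (rule indep_var_restrict[OF indep[folded M'_def X_def]]) (auto simp: K_def i)
  then have past[measurable]: "past \<in> measurable M (PiM K M')"
    and now[measurable]: "now \<in> measurable M (PiM {(i, j)} M')"
    and joint: "distr M (PiM K M' \<Otimes>\<^sub>M PiM {(i, j)} M') (\<lambda>\<omega>. (past \<omega>, now \<omega>))
      = distr M (PiM K M') past \<Otimes>\<^sub>M distr M (PiM {(i, j)} M') now"
    by (simp_all add: indep_var_distribution_eq)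
  have Yf[measurable]: "Yf \<in> borel_measurable (PiM K M')"
    unfolding Yf_def K_def M'_def by (rule measurable_neo_y_past)
  have proj[measurable]: "(\<lambda>u. u (i, j)) \<in> measurable (PiM {(i, j)} M') (D i \<Otimes>\<^sub>M Q)"
    using measurable_component_singleton[of "(i, j)" "{(i, j)}" M'] by (simp add: M'_def)
  have Y_eq: "Yf (past \<omega>) = Y j \<omega>" for \<omega>
    unfolding Yf_def past_def by (rule neo_y_cong) (simp add: K_def X_def)
  have now_ij: "now \<omega> (i, j) = (\<xi> i j \<omega>, s i j \<omega>)" for \<omega>
    by (simp add: now_def X_def)
  have law_Y: "distr M borel (Y j) = distr (distr M (PiM K M') past) borel Yf"
    by (subst distr_distr) (simp_all add: comp_def Y_eq)
  have law_now: "distr (distr M (PiM {(i, j)} M') now) (D i \<Otimes>\<^sub>M Q) (\<lambda>u. u (i, j)) = D i \<Otimes>\<^sub>M Q"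
    by (subst distr_distr) (simp_all add: comp_def now_ij laws[OF i])
  have "distr M borel (Y j) \<Otimes>\<^sub>M (D i \<Otimes>\<^sub>M Q) = distr (distr M (PiM K M') past) borel Yf
      \<Otimes>\<^sub>M distr (distr M (PiM {(i, j)} M') now) (D i \<Otimes>\<^sub>M Q) (\<lambda>u. u (i, j))"
    by (simp only: law_Y law_now)
  also have "\<dots> = distr (distr M (PiM K M') past \<Otimes>\<^sub>M distr M (PiM {(i, j)} M') now)
      (borel \<Otimes>\<^sub>M (D i \<Otimes>\<^sub>M Q)) (\<lambda>(u, v). (Yf u, v (i, j)))"
    using D_prob[OF i] Q_prob
    by (intro pair_measure_distr) (simp_all add: law_now prob_space_imp_sigma_finite prob_space_pair)
  also have "\<dots> = distr M (borel \<Otimes>\<^sub>M (D i \<Otimes>\<^sub>M Q)) (\<lambda>\<omega>. (Y j \<omega>, \<xi> i j \<omega>, s i j \<omega>))"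
    unfolding joint[symmetric] by (subst distr_distr) (simp_all add: comp_def Y_eq now_ij)
  finally show ?thesis ..
qed

lemma measurable_compression_error_integrand:
  assumes i: "i < n"
  shows "(\<lambda>(y, z). ennreal ((norm (g i y (fst z) - rep_compress C R (snd z) (g i y (fst z))))\<^sup>2))
    \<in> borel_measurable (borel \<Otimes>\<^sub>M (D i \<Otimes>\<^sub>M Q))"
proof -
  have "(\<lambda>p. (fst p, fst (snd p))) \<in> measurable (borel \<Otimes>\<^sub>M (D i \<Otimes>\<^sub>M Q)) (borel \<Otimes>\<^sub>M D i)"
    by measurable
  from measurable_compose[OF this g_meas[OF i]]
  have [measurable]: "(\<lambda>p. g i (fst p) (fst (snd p))) \<in> borel_measurable (borel \<Otimes>\<^sub>M (D i \<Otimes>\<^sub>M Q))"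
    by (simp add: split_beta)
  have "(\<lambda>p. (snd (snd p), g i (fst p) (fst (snd p)))) \<in> measurable (borel \<Otimes>\<^sub>M (D i \<Otimes>\<^sub>M Q)) (Q \<Otimes>\<^sub>M borel)"
    by measurable
  from measurable_compose[OF this CR_meas]
  have [measurable]: "(\<lambda>p. rep_compress C R (snd (snd p)) (g i (fst p) (fst (snd p))))
      \<in> borel_measurable (borel \<Otimes>\<^sub>M (D i \<Otimes>\<^sub>M Q))"
    by (simp add: split_beta)
  show ?thesis
    unfolding split_beta' by measurable
qed

lemma measurable_compression_error:
  assumes i: "i < n"
  shows "compression_error i \<in> borel_measurable borel"
proof -
  interpret sigma_finite_measure "D i \<Otimes>\<^sub>M Q"
    by (intro prob_space_imp_sigma_finite prob_space_pair D_prob[OF i] Q_prob)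
  show ?thesis
    unfolding compression_error_def
    using borel_measurable_nn_integral_fst[OF measurable_compression_error_integrand[OF i]] by simp
qed

lemma compression_error_le:
  "i < n \<Longrightarrow> compression_error i y \<le> ennreal ((1 - \<delta>) ^ R) * ennreal ((norm (gfi i y))\<^sup>2 + \<sigma>\<^sup>2)"
  unfolding compression_error_def
  using delta_le_1 by (intro nn_integral_compression_error_le D_prob Q_prob unbiased variance CR_meas CR_contr) simp_all

lemma expected_compression_error:
  assumes i: "i < n"
  shows "(\<integral>\<^sup>+ \<omega>. ennreal ((norm (stoch_grad i j \<omega> - compressed_grad i j \<omega>))\<^sup>2) \<partial>M)
    = (\<integral>\<^sup>+ \<omega>. compression_error i (Y j \<omega>) \<partial>M)"
  unfolding compression_error_def neo_ghat_def neo_g_def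
  using nn_integral_product_law[OF measurable_Y measurable_sample[OF i] _ distr_Y_sample[OF i]
      measurable_compression_error_integrand[OF i]]
    prob_space_imp_sigma_finite[OF prob_space_pair[OF D_prob[OF i] Q_prob]]
  by simp

lemma measurable_compression_error_sq:
  "i < n \<Longrightarrow> (\<lambda>\<omega>. ennreal ((norm (stoch_grad i j \<omega> - compressed_grad i j \<omega>))\<^sup>2)) \<in> borel_measurable M"
  using measurable_compose[OF measurable_Pair[OF measurable_Y measurable_sample]
      measurable_compression_error_integrand]
  by (simp add: neo_g_def neo_ghat_def)

lemma sum_compression_error_le:
  "(\<Sum>i<n. compression_error i y) \<le> ennreal ((1 - \<delta>) ^ R * real n)
    * (ennreal (\<zeta>\<^sup>2) + ennreal (2 * L) * ennreal (bregman f gf y xstar) + ennreal (\<sigma>\<^sup>2))"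
proof -
  have c: "0 \<le> (1 - \<delta>) ^ R"
    using delta_le_1 by simp
  have "(\<Sum>i<n. compression_error i y) \<le> (\<Sum>i<n. ennreal ((1 - \<delta>) ^ R) * ennreal ((norm (gfi i y))\<^sup>2 + \<sigma>\<^sup>2))"
    by (intro sum_mono compression_error_le) simp
  also have "\<dots> = (\<Sum>i<n. ennreal ((1 - \<delta>) ^ R * ((norm (gfi i y))\<^sup>2 + \<sigma>\<^sup>2)))"
    using c by (simp add: ennreal_mult)
  also have "\<dots> = ennreal ((1 - \<delta>) ^ R * ((\<Sum>i<n. (norm (gfi i y))\<^sup>2) + real n * \<sigma>\<^sup>2))"
    using c by (subst sum_ennreal) (simp_all add: sum.distrib sum_distrib_left[symmetric])
  also have "\<dots> \<le> ennreal ((1 - \<delta>) ^ R * (real n * (\<zeta>\<^sup>2 + 2 * L * bregman f gf y xstar) + real n * \<sigma>\<^sup>2))"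
    using c sum_norm_sq_gfi_le by (intro ennreal_leI mult_left_mono add_right_mono) simp_all
  also have "\<dots> = ennreal ((1 - \<delta>) ^ R * real n * (\<zeta>\<^sup>2 + 2 * L * bregman f gf y xstar + \<sigma>\<^sup>2))"
    by (simp add: algebra_simps)
  also have "\<dots> = ennreal ((1 - \<delta>) ^ R * real n)
      * (ennreal (\<zeta>\<^sup>2) + ennreal (2 * L) * ennreal (bregman f gf y xstar) + ennreal (\<sigma>\<^sup>2))"
    using c L_nonneg bregman_nonneg by (simp add: ennreal_mult ennreal_plus)
  finally show ?thesis .
qed

lemma sum_expected_compression_error_le:
  "(\<Sum>i<n. \<integral>\<^sup>+ \<omega>. ennreal ((norm (stoch_grad i j \<omega> - compressed_grad i j \<omega>))\<^sup>2) \<partial>M)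
    \<le> ennreal ((1 - \<delta>) ^ R * real n)
      * (ennreal (\<zeta>\<^sup>2) + ennreal (2 * L) * expected_bregman j + ennreal (\<sigma>\<^sup>2))"
proof -
  have [measurable]: "(\<lambda>\<omega>. bregman f gf (Y j \<omega>) xstar) \<in> borel_measurable M"
    using measurable_compose[OF measurable_Y measurable_bregman] by simp
  have "(\<Sum>i<n. \<integral>\<^sup>+ \<omega>. ennreal ((norm (stoch_grad i j \<omega> - compressed_grad i j \<omega>))\<^sup>2) \<partial>M)
      = (\<integral>\<^sup>+ \<omega>. (\<Sum>i<n. compression_error i (Y j \<omega>)) \<partial>M)"
    using measurable_compose[OF measurable_Y measurable_compression_error]
    by (subst nn_integral_sum) (simp_all add: expected_compression_error)
  also have "\<dots> \<le> (\<integral>\<^sup>+ \<omega>. ennreal ((1 - \<delta>) ^ R * real n)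
      * (ennreal (\<zeta>\<^sup>2) + ennreal (2 * L) * ennreal (bregman f gf (Y j \<omega>) xstar) + ennreal (\<sigma>\<^sup>2)) \<partial>M)"
    by (intro nn_integral_mono sum_compression_error_le)
  also have "\<dots> = ennreal ((1 - \<delta>) ^ R * real n)
      * (ennreal (\<zeta>\<^sup>2) + ennreal (2 * L) * expected_bregman j + ennreal (\<sigma>\<^sup>2))"
    by (simp add: nn_integral_cmult nn_integral_add emeasure_space_1)
  finally show ?thesis .
qed

lemma accumulated_error_sq_le:
  "ennreal ((norm (\<Sum>j<t. a (Suc j) *\<^sub>R ((1 / real n) *\<^sub>R (\<Sum>i<n. stoch_grad i j \<omega>)
      - (1 / real n) *\<^sub>R (\<Sum>i<n. compressed_grad i j \<omega>))))\<^sup>2)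
    \<le> (\<Sum>j<t. \<Sum>i<n. ennreal (real t * (a (Suc j))\<^sup>2 / real n)
      * ennreal ((norm (stoch_grad i j \<omega> - compressed_grad i j \<omega>))\<^sup>2))"
proof -
  define k where "k j = real t * (a (Suc j))\<^sup>2 / real n" for j
  have k: "0 \<le> k j" for j
    by (simp add: k_def)
  have "ennreal ((norm (\<Sum>j<t. a (Suc j) *\<^sub>R ((1 / real n) *\<^sub>R (\<Sum>i<n. stoch_grad i j \<omega>)
      - (1 / real n) *\<^sub>R (\<Sum>i<n. compressed_grad i j \<omega>))))\<^sup>2)
    \<le> ennreal (\<Sum>j<t. \<Sum>i<n. k j * (norm (stoch_grad i j \<omega> - compressed_grad i j \<omega>))\<^sup>2)"
    unfolding k_def by (intro ennreal_leI norm_sq_sum_scaled_mean_diff_le n_pos)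
  also have "\<dots> = (\<Sum>j<t. \<Sum>i<n. ennreal (k j)
      * ennreal ((norm (stoch_grad i j \<omega> - compressed_grad i j \<omega>))\<^sup>2))"
    using k by (simp add: ennreal_mult sum_nonneg flip: sum_ennreal)
  finally show ?thesis
    unfolding k_def .
qed

lemma expected_accumulated_error_le:
  "(\<integral>\<^sup>+ \<omega>. ennreal ((norm (\<Sum>j<t. a (Suc j) *\<^sub>R
        ((1 / real n) *\<^sub>R (\<Sum>i<n. stoch_grad i j \<omega>)
          - (1 / real n) *\<^sub>R (\<Sum>i<n. compressed_grad i j \<omega>))))\<^sup>2) \<partial>M)
    \<le> (\<Sum>j<t. ennreal ((1 - \<delta>) ^ R * real t * (a (Suc j))\<^sup>2)
      * (ennreal (\<zeta>\<^sup>2) + ennreal (2 * L) * expected_bregman j + ennreal (\<sigma>\<^sup>2)))"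
proof -
  define k where "k j = real t * (a (Suc j))\<^sup>2 / real n" for j
  define err where "err i j \<omega> = ennreal ((norm (stoch_grad i j \<omega> - compressed_grad i j \<omega>))\<^sup>2)" for i j \<omega>
  have k: "0 \<le> k j" for j
    by (simp add: k_def)
  have [measurable]: "i < n \<Longrightarrow> err i j \<in> borel_measurable M" for i j
    unfolding err_def by (rule measurable_compression_error_sq)
  have "(\<integral>\<^sup>+ \<omega>. ennreal ((norm (\<Sum>j<t. a (Suc j) *\<^sub>R
        ((1 / real n) *\<^sub>R (\<Sum>i<n. stoch_grad i j \<omega>)
          - (1 / real n) *\<^sub>R (\<Sum>i<n. compressed_grad i j \<omega>))))\<^sup>2) \<partial>M)
      \<le> (\<integral>\<^sup>+ \<omega>. (\<Sum>j<t. \<Sum>i<n. ennreal (k j) * err i j \<omega>) \<partial>M)"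
    unfolding k_def err_def by (intro nn_integral_mono accumulated_error_sq_le)
  also have "\<dots> = (\<Sum>j<t. ennreal (k j) * (\<Sum>i<n. integral\<^sup>N M (err i j)))"
  proof -
    have "(\<integral>\<^sup>+ \<omega>. (\<Sum>i<n. ennreal (k j) * err i j \<omega>) \<partial>M) = ennreal (k j) * (\<Sum>i<n. integral\<^sup>N M (err i j))"
      for j by (subst nn_integral_sum) (auto simp: nn_integral_cmult sum_distrib_left)
    then show ?thesis
      by (subst nn_integral_sum) auto
  qed
  also have "\<dots> \<le> (\<Sum>j<t. ennreal (k j) * (ennreal ((1 - \<delta>) ^ R * real n)
      * (ennreal (\<zeta>\<^sup>2) + ennreal (2 * L) * expected_bregman j + ennreal (\<sigma>\<^sup>2))))"
    unfolding err_def by (intro sum_mono mult_left_mono sum_expected_compression_error_le) simp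
  also have "\<dots> = (\<Sum>j<t. ennreal ((1 - \<delta>) ^ R * real t * (a (Suc j))\<^sup>2)
      * (ennreal (\<zeta>\<^sup>2) + ennreal (2 * L) * expected_bregman j + ennreal (\<sigma>\<^sup>2)))"
  proof (intro sum.cong refl)
    fix j
    have "ennreal (k j) * ennreal ((1 - \<delta>) ^ R * real n) = ennreal ((1 - \<delta>) ^ R * real t * (a (Suc j))\<^sup>2)"
      using k delta_le_1 n_pos by (simp add: k_def ennreal_mult[symmetric])
    then show "ennreal (k j) * (ennreal ((1 - \<delta>) ^ R * real n)
        * (ennreal (\<zeta>\<^sup>2) + ennreal (2 * L) * expected_bregman j + ennreal (\<sigma>\<^sup>2)))
      = ennreal ((1 - \<delta>) ^ R * real t * (a (Suc j))\<^sup>2)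
        * (ennreal (\<zeta>\<^sup>2) + ennreal (2 * L) * expected_bregman j + ennreal (\<sigma>\<^sup>2))"
      by (simp add: mult.assoc[symmetric])
  qed
  finally show ?thesis .
qed

end

theorem mainTheorem1:
  fixes n :: nat
    and fi :: "nat \<Rightarrow> 'a::euclidean_space \<Rightarrow> real" and gfi :: "nat \<Rightarrow> 'a \<Rightarrow> 'a"
    and f :: "'a \<Rightarrow> real" and gf :: "'a \<Rightarrow> 'a"
    and L \<sigma> \<zeta> \<delta> :: real and R :: nat and xstar :: 'a
    and g :: "nat \<Rightarrow> 'a \<Rightarrow> 'x \<Rightarrow> 'a" and D :: "nat \<Rightarrow> 'x measure"
    and C :: "'c \<Rightarrow> 'a \<Rightarrow> 'a" and Q :: "(nat \<Rightarrow> 'c) measure"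
    and M :: "'m measure"
    and \<xi> :: "nat \<Rightarrow> nat \<Rightarrow> 'm \<Rightarrow> 'x" and s :: "nat \<Rightarrow> nat \<Rightarrow> 'm \<Rightarrow> nat \<Rightarrow> 'c"
    and a :: "nat \<Rightarrow> real" and A0 :: real and x0 v0 :: 'a
    and w :: "nat \<Rightarrow> real" and T :: nat
  assumes n_pos: "n > 0"
    and grad_fi: "\<And>i x. i < n \<Longrightarrow> (fi i has_derivative (\<lambda>h. inner (gfi i x) h)) (at x)"
    and f_def: "f = (\<lambda>x. (\<Sum>i<n. fi i x) / real n)"
    and gf_def: "gf = (\<lambda>x. (1 / real n) *\<^sub>R (\<Sum>i<n. gfi i x))"
    and f_convex: "convex_on UNIV f"
    and f_smooth: "\<And>x y. norm (gf x - gf y) \<le> L * norm (x - y)"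
    and xstar_min: "\<And>x. f xstar \<le> f x"
    and similarity: "\<And>x. (\<Sum>i<n. (norm (gfi i x - gf x))\<^sup>2) / real n \<le> \<zeta>\<^sup>2"
    and D_prob: "\<And>i. i < n \<Longrightarrow> prob_space (D i)"
    and g_meas: "\<And>i. i < n \<Longrightarrow> (\<lambda>(y, e). g i y e) \<in> borel_measurable (borel \<Otimes>\<^sub>M D i)"
    and unbiased: "\<And>i x. i < n \<Longrightarrow> has_bochner_integral (D i) (\<lambda>e. g i x e) (gfi i x)"
    and variance: "\<And>i x. i < n \<Longrightarrow>
        (\<integral>\<^sup>+ e. ennreal ((norm (g i x e - gfi i x))\<^sup>2) \<partial>D i) \<le> ennreal (\<sigma>\<^sup>2)"
    and delta: "0 < \<delta>" "\<delta> \<le> 1" and R_pos: "R \<ge> 1"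
    and Q_prob: "prob_space Q"
    and CR_meas: "(\<lambda>(u, x). rep_compress C R u x) \<in> borel_measurable (Q \<Otimes>\<^sub>M borel)"
    and CR_contr: "\<And>x. (\<integral>\<^sup>+ u. ennreal ((norm (rep_compress C R u x - x))\<^sup>2) \<partial>Q)
                       \<le> ennreal ((1 - \<delta>) ^ R * (norm x)\<^sup>2)"
    and M_prob: "prob_space M"
    and indep: "prob_space.indep_vars M (\<lambda>(i, t). D i \<Otimes>\<^sub>M Q) (\<lambda>(i, t) \<omega>. (\<xi> i t \<omega>, s i t \<omega>))
                  ({..<n} \<times> UNIV)"
    and laws: "\<And>i t. i < n \<Longrightarrow> distr M (D i \<Otimes>\<^sub>M Q) (\<lambda>\<omega>. (\<xi> i t \<omega>, s i t \<omega>)) = D i \<Otimes>\<^sub>M Q"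
    and A0_nonneg: "A0 \<ge> 0"
    and a_pos: "\<And>t. t \<ge> 1 \<Longrightarrow> a t > 0"
    and T_pos: "T \<ge> 1"
    and w_nonneg: "\<And>t. 1 \<le> t \<Longrightarrow> t \<le> T \<Longrightarrow> w t \<ge> 0"
  shows
   "(\<Sum>t<T. ennreal (w (Suc t)) *
       (\<integral>\<^sup>+ \<omega>. ennreal ((norm (\<Sum>j<t. a (Suc j) *\<^sub>R
            ((1 / real n) *\<^sub>R (\<Sum>i<n. neo_g n g C R a A0 x0 v0 (\<lambda>i t. \<xi> i t \<omega>) (\<lambda>i t. s i t \<omega>) i j)
             - (1 / real n) *\<^sub>R (\<Sum>i<n. neo_ghat n g C R a A0 x0 v0 (\<lambda>i t. \<xi> i t \<omega>) (\<lambda>i t. s i t \<omega>) i j))))\<^sup>2) \<partial>M))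
    \<le> ennreal ((1 - \<delta>) ^ R * \<zeta>\<^sup>2 * (\<Sum>t<T. w (Suc t) * real t * (\<Sum>j<t. (a (Suc j))\<^sup>2)))
      + ennreal (2 * L * (1 - \<delta>) ^ R) *
         (\<Sum>t<T. ennreal (w (Suc t) * real t) *
            (\<Sum>j<t. ennreal ((a (Suc j))\<^sup>2) *
               (\<integral>\<^sup>+ \<omega>. ennreal (bregman f gf
                   (neo_y n g C R a A0 x0 v0 (\<lambda>i t. \<xi> i t \<omega>) (\<lambda>i t. s i t \<omega>) j) xstar) \<partial>M)))
      + ennreal ((1 - \<delta>) ^ R * \<sigma>\<^sup>2 * (\<Sum>t<T. w (Suc t) * real t * (\<Sum>j<t. (a (Suc j))\<^sup>2)))"
proof -
  have f_grad: "(f has_derivative (\<lambda>h. inner (gf x) h)) (at x)" for x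
    unfolding f_def gf_def by (rule has_derivative_average) (rule grad_fi)
  interpret neolithic M n gfi f gf L \<sigma> \<zeta> \<delta> R xstar g D C Q \<xi> s a A0 x0 v0
    by (intro neolithic.intro neolithic_axioms.intro M_prob)
      (fact n_pos f_grad gf_def f_smooth xstar_min similarity D_prob g_meas unbiased variance
        delta(2) Q_prob CR_meas CR_contr indep laws)+
  have "(\<Sum>t<T. ennreal (w (Suc t)) *
       (\<integral>\<^sup>+ \<omega>. ennreal ((norm (\<Sum>j<t. a (Suc j) *\<^sub>R
            ((1 / real n) *\<^sub>R (\<Sum>i<n. stoch_grad i j \<omega>)
             - (1 / real n) *\<^sub>R (\<Sum>i<n. compressed_grad i j \<omega>))))\<^sup>2) \<partial>M))
    \<le> (\<Sum>t<T. ennreal (w (Suc t)) * (\<Sum>j<t. ennreal ((1 - \<delta>) ^ R * real t * (a (Suc j))\<^sup>2)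
      * (ennreal (\<zeta>\<^sup>2) + ennreal (2 * L) * expected_bregman j + ennreal (\<sigma>\<^sup>2))))"
    by (intro sum_mono mult_left_mono expected_accumulated_error_le) simp
  also have "\<dots> = ennreal ((1 - \<delta>) ^ R * \<zeta>\<^sup>2 * (\<Sum>t<T. w (Suc t) * real t * (\<Sum>j<t. (a (Suc j))\<^sup>2)))
      + ennreal (2 * L * (1 - \<delta>) ^ R) *
         (\<Sum>t<T. ennreal (w (Suc t) * real t) * (\<Sum>j<t. ennreal ((a (Suc j))\<^sup>2) * expected_bregman j))
      + ennreal ((1 - \<delta>) ^ R * \<sigma>\<^sup>2 * (\<Sum>t<T. w (Suc t) * real t * (\<Sum>j<t. (a (Suc j))\<^sup>2)))"
    using w_nonneg delta L_nonneg
    by (intro weighted_sum_regroup_ennreal[where W = "\<lambda>t. w (Suc t)" and b = "\<lambda>j. (a (Suc j))\<^sup>2"]) auto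
  finally show ?thesis .
qed

end
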